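(* For every pair $X,Y$ of nominal sets, the sets $\mathrm{Kl}(\mathcal{P}_{\mathsf{fs}})(X,Y)$ and $\mathrm{Kl}(\mathcal{P}_{\mathsf{ufs}})(X,Y)$ of equivariant maps $X\to\mathcal{P}_{\mathsf{fs}}Y$, respectively $X\to\mathcal{P}_{\mathsf{ufs}}Y$, ordered pointwise by inclusion ($f\le g$ iff $f(x)\subseteq g(x)$ for all $x\in X$), form complete lattices (in particular dcpos with bottom).
   Context: Fix a countably infinite set $\mathbb{A}$ of names and let $\mathrm{Perm}(\mathbb{A})$ be the group of finite permutations of $\mathbb{A}$. A nominal set is a set $X$ with an action of $\mathrm{Perm}(\mathbb{A})$ such that every $x\in X$ has a finite support $S\subseteq\mathbb{A}$ (i.e. $\pi\cdot x=x$ whenever $\pi$ fixes $S$ pointwise); $\mathrm{supp}(x)$ denotes the least support. A map is equivariant if it commutes with the actions. A subset $A\subseteq X$ is finitely supported if it has a finite support for the action $\pi\cdot A=\{\pi\cdot x: x\in A\}$, and uniformly finitely supported if $\bigcup_{x\in A}\mathrm{supp}(x)$ is finite. $\mathcal{P}_{\mathsf{fs}}X$ (resp. $\mathcal{P}_{\mathsf{ufs}}X$) is the nominal set of finitely supported (resp. uniformly finitely supported) subsets of $X$; these are monads on the category $\mathsf{Nom}$ of nominal sets and equivariant maps, with unit $x\mapsto\{x\}$ and multiplication given by union. $\mathrm{Kl}(T)(X,Y)$ denotes the set of morphisms $X\to Y$ of the Kleisli category, i.e. equivariant maps $X\to TY$. *)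

theory Defs
  imports "HOL-Algebra.Complete_Lattice"
begin

text \<open>Names: we take the countably infinite set of names to be \<open>nat\<close>
(any countably infinite set is in bijection with it).
Finite permutations of the names.\<close>

definition finperm :: "(nat \<Rightarrow> nat) \<Rightarrow> bool" where
  "finperm p \<longleftrightarrow> bij p \<and> finite {a. p a \<noteq> a}"

definition supports :: "((nat \<Rightarrow> nat) \<Rightarrow> 'x \<Rightarrow> 'x) \<Rightarrow> nat set \<Rightarrow> 'x \<Rightarrow> bool" where
  "supports act S x \<longleftrightarrow> (\<forall>p. finperm p \<longrightarrow> (\<forall>a\<in>S. p a = a) \<longrightarrow> act p x = x)"

definition supp :: "((nat \<Rightarrow> nat) \<Rightarrow> 'x \<Rightarrow> 'x) \<Rightarrow> 'x \<Rightarrow> nat set" where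
  "supp act x = \<Inter> {S. finite S \<and> supports act S x}"

definition nominal_set :: "'x set \<Rightarrow> ((nat \<Rightarrow> nat) \<Rightarrow> 'x \<Rightarrow> 'x) \<Rightarrow> bool" where
  "nominal_set X act \<longleftrightarrow>
     (\<forall>p x. finperm p \<longrightarrow> x \<in> X \<longrightarrow> act p x \<in> X) \<and>
     (\<forall>x\<in>X. act id x = x) \<and>
     (\<forall>p q x. finperm p \<longrightarrow> finperm q \<longrightarrow> x \<in> X \<longrightarrow> act (p \<circ> q) x = act p (act q x)) \<and>
     (\<forall>x\<in>X. \<exists>S. finite S \<and> supports act S x)"

definition set_act :: "((nat \<Rightarrow> nat) \<Rightarrow> 'x \<Rightarrow> 'x) \<Rightarrow> (nat \<Rightarrow> nat) \<Rightarrow> 'x set \<Rightarrow> 'x set" where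
  "set_act act p A = act p ` A"

definition Pfs :: "'y set \<Rightarrow> ((nat \<Rightarrow> nat) \<Rightarrow> 'y \<Rightarrow> 'y) \<Rightarrow> 'y set set" where
  "Pfs Y act = {A. A \<subseteq> Y \<and> (\<exists>S. finite S \<and> supports (set_act act) S A)}"

definition Pufs :: "'y set \<Rightarrow> ((nat \<Rightarrow> nat) \<Rightarrow> 'y \<Rightarrow> 'y) \<Rightarrow> 'y set set" where
  "Pufs Y act = {A. A \<subseteq> Y \<and> finite (\<Union>y\<in>A. supp act y)}"

text \<open>Kleisli hom-sets: equivariant maps \<open>X \<rightarrow> T Y\<close> for \<open>T Y\<close> a set of subsets of \<open>Y\<close>
(with the pointwise action); maps are taken extensionally (value \<open>{}\<close> outside \<open>X\<close>).\<close>
definition Kl :: "'x set \<Rightarrow> ((nat \<Rightarrow> nat) \<Rightarrow> 'x \<Rightarrow> 'x) \<Rightarrow> 'y set set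
                  \<Rightarrow> ((nat \<Rightarrow> nat) \<Rightarrow> 'y \<Rightarrow> 'y) \<Rightarrow> ('x \<Rightarrow> 'y set) set" where
  "Kl X actX TY actY =
     {f. (\<forall>x\<in>X. f x \<in> TY) \<and> (\<forall>x. x \<notin> X \<longrightarrow> f x = {}) \<and>
         (\<forall>p x. finperm p \<longrightarrow> x \<in> X \<longrightarrow> f (actX p x) = set_act actY p (f x))}"

definition Kl_order :: "'x set \<Rightarrow> ('x \<Rightarrow> 'y set) set \<Rightarrow> ('x \<Rightarrow> 'y set) gorder" where
  "Kl_order X K = \<lparr>carrier = K, eq = (=), le = (\<lambda>f g. \<forall>x\<in>X. f x \<subseteq> g x)\<rparr>"

end

theory Submission
  imports Defs "HOL-Combinatorics.Transposition"
begin

(* Suprema are pointwise unions, and infima are suprema of lower bounds, so it suffices that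
   both hom-sets are closed under pointwise unions.  Fix x and a finite support S of x; by
   equivariance S supports every value f x.  For Pfs this suffices, as a union of sets supported
   by S is supported by S.  For Pufs the key fact is that every element y of a uniformly finitely
   supported set A has its support inside any finite support S of A: otherwise swapping a name
   a of supp y outside S with a fresh name b moves y to an element of A whose support misses b,
   and swapping back gives a support of y missing a.  So all element supports of the union lie
   in the finite set S. *)

lemma (in partial_order) complete_lattice_criterion_sup:
  assumes sup_exists: "\<And>A. A \<subseteq> carrier L \<Longrightarrow> \<exists>s. least L s (Upper L A)"
  shows "complete_lattice L"
proof (rule complete_latticeI)
  fix A assume A: "A \<subseteq> carrier L"
  then show "\<exists>s. least L s (Upper L A)" by (rule sup_exists)
  obtain i where i: "least L i (Upper L (Lower L A))"
    using sup_exists[of "Lower L A"] by blast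
  have "greatest L i (Lower L A)"
  proof (rule greatest_LowerI)
    fix x assume "x \<in> A"
    then have "x \<in> Upper L (Lower L A)"
      using A by (intro Upper_memI) auto
    with i show "i \<sqsubseteq> x" by (rule least_le)
  next
    fix y assume "y \<in> Lower L A"
    with i show "y \<sqsubseteq> i" by (rule least_Upper_above) simp
  qed (use A i in blast)+
  then show "\<exists>i. greatest L i (Lower L A)" ..
qed

definition pointwise_Union :: "'x set \<Rightarrow> ('x \<Rightarrow> 'y set) set \<Rightarrow> 'x \<Rightarrow> 'y set" where
  "pointwise_Union X F x = (if x \<in> X then (\<Union>f\<in>F. f x) else {})"

lemma partial_order_Kl_order:
  assumes "\<And>f x. f \<in> K \<Longrightarrow> x \<notin> X \<Longrightarrow> f x = {}"
  shows "partial_order (Kl_order X K)"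
proof (unfold_locales, simp_all add: Kl_order_def)
  fix f g assume "\<forall>x\<in>X. f x \<subseteq> g x" "\<forall>x\<in>X. g x \<subseteq> f x" "f \<in> K" "g \<in> K"
  then show "f = g" using assms by (intro ext) (metis subset_antisym)
next
  fix f g h :: "'a \<Rightarrow> 'b set"
  assume "\<forall>x\<in>X. f x \<subseteq> g x" "\<forall>x\<in>X. g x \<subseteq> h x"
  then show "\<forall>x\<in>X. f x \<subseteq> h x" by blast
qed

lemma least_Upper_pointwise_Union:
  assumes "F \<subseteq> K" and "pointwise_Union X F \<in> K"
  shows "least (Kl_order X K) (pointwise_Union X F) (Upper (Kl_order X K) F)"
  using assms by (auto simp: least_def Upper_def Kl_order_def pointwise_Union_def)

lemma complete_lattice_Kl_orderI:
  assumes "\<And>f x. f \<in> K \<Longrightarrow> x \<notin> X \<Longrightarrow> f x = {}"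
    and "\<And>F. F \<subseteq> K \<Longrightarrow> pointwise_Union X F \<in> K"
  shows "complete_lattice (Kl_order X K)"
proof (rule partial_order.complete_lattice_criterion_sup)
  show "partial_order (Kl_order X K)" using assms(1) by (rule partial_order_Kl_order)
  fix F assume "F \<subseteq> carrier (Kl_order X K)"
  then have "F \<subseteq> K" by (simp add: Kl_order_def)
  then show "\<exists>s. least (Kl_order X K) s (Upper (Kl_order X K) F)"
    using assms(2) least_Upper_pointwise_Union by blast
qed

lemma finperm_comp:
  assumes "finperm p" and "finperm q"
  shows "finperm (p \<circ> q)"
proof -
  have "{c. (p \<circ> q) c \<noteq> c} \<subseteq> {c. p c \<noteq> c} \<union> {c. q c \<noteq> c}"
    by auto
  with assms show ?thesis
    unfolding finperm_def by (auto intro: bij_comp finite_subset)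
qed

lemma finperm_transpose: "finperm (transpose a b)"
  unfolding finperm_def
  by (auto intro: rev_finite_subset[of "{a, b}"] simp: transpose_def)

lemma nominal_set_act_comp:
  "nominal_set Y act \<Longrightarrow> finperm p \<Longrightarrow> finperm q \<Longrightarrow> y \<in> Y \<Longrightarrow> act (p \<circ> q) y = act p (act q y)"
  by (simp add: nominal_set_def)

lemma nominal_set_act_transpose_involutory:
  assumes "nominal_set Y act" and "y \<in> Y"
  shows "act (transpose a b) (act (transpose a b) y) = y"
proof -
  have "act (transpose a b \<circ> transpose a b) y = act (transpose a b) (act (transpose a b) y)"
    by (rule nominal_set_act_comp[OF assms(1) finperm_transpose finperm_transpose assms(2)])
  then show ?thesis
    using assms by (simp add: nominal_set_def)
qed

lemma supports_act_transpose:
  assumes nom: "nominal_set Y act" and "z \<in> Y" and "supports act S z"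
  shows "supports act (transpose a b ` S) (act (transpose a b) z)"
  unfolding supports_def
proof (intro allI impI)
  let ?t = "transpose a b"
  fix q assume q: "finperm q" "\<forall>c\<in>?t ` S. q c = c"
  define q' where "q' = ?t \<circ> q \<circ> ?t"
  have q': "finperm q'"
    unfolding q'_def by (intro finperm_comp finperm_transpose q(1))
  have "\<forall>c\<in>S. q' c = c"
    using q(2) by (simp add: q'_def)
  then have fixed: "act q' z = z"
    using \<open>supports act S z\<close> q' by (simp add: supports_def)
  have "?t \<circ> q' = q \<circ> ?t"
    by (simp add: q'_def fun_eq_iff)
  then have "act ?t (act q' z) = act q (act ?t z)"
    using nominal_set_act_comp[OF nom] q q' finperm_transpose \<open>z \<in> Y\<close> by metis
  then show "act q (act ?t z) = act ?t z"
    by (simp add: fixed)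
qed

lemma supp_subset_support_of_ufs:
  assumes nom: "nominal_set Y act" and "A \<subseteq> Y" and "finite S"
    and S: "supports (set_act act) S A" and ufs: "finite (\<Union>y\<in>A. supp act y)"
    and "y \<in> A"
  shows "supp act y \<subseteq> S"
proof
  fix a assume a: "a \<in> supp act y"
  show "a \<in> S"
  proof (rule ccontr)
    assume "a \<notin> S"
    obtain b where b: "b \<notin> S \<union> (\<Union>y\<in>A. supp act y) \<union> {a}"
      using ex_new_if_finite[OF infinite_UNIV_nat] \<open>finite S\<close> ufs
      by (metis finite_Un finite.emptyI finite.insertI)
    let ?t = "transpose a b"
    have "\<forall>c\<in>S. ?t c = c"
      using \<open>a \<notin> S\<close> b by (auto simp: transpose_def)
    then have "set_act act ?t A = A"
      using S finperm_transpose unfolding supports_def by blast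
    then have ty: "act ?t y \<in> A"
      using \<open>y \<in> A\<close> by (auto simp: set_act_def)
    then have "b \<notin> supp act (act ?t y)"
      using b by blast
    then obtain R where R: "finite R" "supports act R (act ?t y)" "b \<notin> R"
      unfolding supp_def by blast
    have "act ?t y \<in> Y"
      using ty \<open>A \<subseteq> Y\<close> by blast
    then have "supports act (?t ` R) (act ?t (act ?t y))"
      using supports_act_transpose[OF nom _ R(2)] by blast
    then have "supports act (?t ` R) y"
      using nominal_set_act_transpose_involutory[OF nom] \<open>y \<in> A\<close> \<open>A \<subseteq> Y\<close> by auto
    moreover have "a \<notin> ?t ` R"
      using R(3) b by (auto simp: transpose_def split: if_splits)
    ultimately show False
      using a R(1) unfolding supp_def by blast
  qed
qed

lemma Kl_value:
  "f \<in> Kl X actX TY actY \<Longrightarrow> x \<in> X \<Longrightarrow> f x \<in> TY"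
  by (simp add: Kl_def)

lemma Kl_vanishes_outside:
  "f \<in> Kl X actX TY actY \<Longrightarrow> x \<notin> X \<Longrightarrow> f x = {}"
  by (simp add: Kl_def)

lemma Kl_equivariant:
  "f \<in> Kl X actX TY actY \<Longrightarrow> finperm p \<Longrightarrow> x \<in> X \<Longrightarrow> f (actX p x) = set_act actY p (f x)"
  by (simp add: Kl_def)

lemma supports_Kl_value:
  assumes "f \<in> Kl X actX TY actY" and "x \<in> X" and "supports actX S x"
  shows "supports (set_act actY) S (f x)"
  unfolding supports_def
proof (intro allI impI)
  fix p assume "finperm p" "\<forall>a\<in>S. p a = a"
  then have "actX p x = x"
    using assms(3) by (simp add: supports_def)
  then show "set_act actY p (f x) = f x"
    using Kl_equivariant[OF assms(1) \<open>finperm p\<close> assms(2)] by simp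
qed

lemma supports_set_act_UN:
  assumes "\<And>i. i \<in> I \<Longrightarrow> supports (set_act act) S (B i)"
  shows "supports (set_act act) S (\<Union>i\<in>I. B i)"
  using assms by (simp add: supports_def set_act_def image_UN)

lemma pointwise_Union_in_Kl:
  assumes nom: "nominal_set X actX" and F: "F \<subseteq> Kl X actX TY actY"
    and value_in_TY: "\<And>x. x \<in> X \<Longrightarrow> pointwise_Union X F x \<in> TY"
  shows "pointwise_Union X F \<in> Kl X actX TY actY"
proof -
  have "pointwise_Union X F (actX p x) = set_act actY p (pointwise_Union X F x)"
    if "finperm p" "x \<in> X" for p x
  proof -
    have "actX p x \<in> X"
      using nom that by (simp add: nominal_set_def)
    moreover have "f (actX p x) = set_act actY p (f x)" if "f \<in> F" for f
      using F \<open>f \<in> F\<close> Kl_equivariant[OF _ \<open>finperm p\<close> \<open>x \<in> X\<close>] by blast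
    ultimately show ?thesis
      using \<open>x \<in> X\<close> by (simp add: pointwise_Union_def set_act_def image_UN)
  qed
  then show ?thesis
    using value_in_TY by (simp add: Kl_def pointwise_Union_def)
qed

lemma pointwise_Union_in_Kl_Pfs:
  assumes nom: "nominal_set X actX" and F: "F \<subseteq> Kl X actX (Pfs Y actY) actY"
  shows "pointwise_Union X F \<in> Kl X actX (Pfs Y actY) actY"
proof (rule pointwise_Union_in_Kl[OF nom F])
  fix x assume x: "x \<in> X"
  obtain S where S: "finite S" "supports actX S x"
    using nom x by (auto simp: nominal_set_def)
  have "supports (set_act actY) S (\<Union>f\<in>F. f x)"
    using F x S(2) by (intro supports_set_act_UN supports_Kl_value) auto
  moreover have "f x \<subseteq> Y" if "f \<in> F" for f
  proof -
    have "f \<in> Kl X actX (Pfs Y actY) actY"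
      using F that by blast
    then have "f x \<in> Pfs Y actY"
      using x by (rule Kl_value)
    then show ?thesis
      by (simp add: Pfs_def)
  qed
  ultimately show "pointwise_Union X F x \<in> Pfs Y actY"
    using x S(1) by (auto simp: Pfs_def pointwise_Union_def)
qed

lemma pointwise_Union_in_Kl_Pufs:
  assumes nomX: "nominal_set X actX" and nomY: "nominal_set Y actY"
    and F: "F \<subseteq> Kl X actX (Pufs Y actY) actY"
  shows "pointwise_Union X F \<in> Kl X actX (Pufs Y actY) actY"
proof (rule pointwise_Union_in_Kl[OF nomX F])
  fix x assume x: "x \<in> X"
  obtain S where S: "finite S" "supports actX S x"
    using nomX x by (auto simp: nominal_set_def)
  have fx: "f x \<subseteq> Y" "finite (\<Union>y\<in>f x. supp actY y)"
    "supports (set_act actY) S (f x)" if "f \<in> F" for f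
  proof -
    have "f \<in> Kl X actX (Pufs Y actY) actY"
      using F that by blast
    then show "supports (set_act actY) S (f x)"
      using x S(2) by (rule supports_Kl_value)
    have "f x \<in> Pufs Y actY"
      using \<open>f \<in> Kl X actX (Pufs Y actY) actY\<close> x by (rule Kl_value)
    then show "f x \<subseteq> Y" "finite (\<Union>y\<in>f x. supp actY y)"
      by (simp_all add: Pufs_def)
  qed
  have "supp actY y \<subseteq> S" if "f \<in> F" "y \<in> f x" for f y
    using supp_subset_support_of_ufs[OF nomY fx(1)[OF that(1)] S(1)] fx(2,3) that by blast
  then have "(\<Union>y\<in>pointwise_Union X F x. supp actY y) \<subseteq> S"
    using x by (auto simp: pointwise_Union_def)
  moreover have "pointwise_Union X F x \<subseteq> Y"
    using x fx(1) by (auto simp: pointwise_Union_def)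
  ultimately show "pointwise_Union X F x \<in> Pufs Y actY"
    using S(1) by (auto simp: Pufs_def intro: finite_subset)
qed

theorem proposition3p7:
  fixes X :: "'x set" and actX :: "(nat \<Rightarrow> nat) \<Rightarrow> 'x \<Rightarrow> 'x"
    and Y :: "'y set" and actY :: "(nat \<Rightarrow> nat) \<Rightarrow> 'y \<Rightarrow> 'y"
  assumes "nominal_set X actX" and "nominal_set Y actY"
  shows "complete_lattice (Kl_order X (Kl X actX (Pfs Y actY) actY)) \<and>
         complete_lattice (Kl_order X (Kl X actX (Pufs Y actY) actY))"
proof
  show "complete_lattice (Kl_order X (Kl X actX (Pfs Y actY) actY))"
    using Kl_vanishes_outside pointwise_Union_in_Kl_Pfs[OF assms(1)]
    by (rule complete_lattice_Kl_orderI)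
  show "complete_lattice (Kl_order X (Kl X actX (Pufs Y actY) actY))"
    using Kl_vanishes_outside pointwise_Union_in_Kl_Pufs[OF assms]
    by (rule complete_lattice_Kl_orderI)
qed

end
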